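(* Fix $\sigma^2>0$. For $\delta>0$ let $\rho_0=\frac{\delta}{1+\sigma^2}$ and define $\phi^{-1}_\delta:[0,\infty)\to\mathbb R$ by $\phi^{-1}_\delta(\rho)=1$ for $0\le\rho<\rho_0$ and $\phi^{-1}_\delta(\rho)=\frac{\delta}{\rho}-\sigma^2$ for $\rho\ge\rho_0$. Let $$\mathrm{mmse}(\mathcal B,\rho)=1-\int_{-\infty}^{\infty}\frac{e^{-x^2/2}}{\sqrt{2\pi}}\tanh\!\left(\rho-\sqrt{\rho}\,x\right)\mathrm{d}x,$$ let $\psi^{opt}_{\mathcal B}(\rho)=\min\{\phi^{-1}_\delta(\rho),\mathrm{mmse}(\mathcal B,\rho)\}$, and $$a_{\mathcal B}(\delta)=\int_0^\infty\big(\phi^{-1}_\delta(\rho)-\psi^{opt}_{\mathcal B}(\rho)\big)\,\mathrm d\rho .$$ Define $R_{\mathrm{AC}}(\delta)=C_{\mathrm G}-\frac{a_{\mathcal B}(\delta)}{2\delta}$ with $C_{\mathrm G}=\frac12\ln(1+1/\sigma^2)$. Then $a_{\mathcal B}(\delta)/(2\delta)\to0$, i.e. $R_{\mathrm{AC}}(\delta)\to C_{\mathrm G}$, as $\delta\to0$.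
   Context: $\mathrm{mmse}(\mathcal B,\rho)$ is the minimum mean-squared error of estimating a uniformly distributed $s\in\{+1,-1\}$ from $\sqrt\rho\,s+w$ with $w\sim\mathcal N(0,1)$ independent of $s$. $\phi^{-1}_\delta$ is the (extended) inverse of $\phi(v)=\delta/(v+\sigma^2)$, $v\in[0,1]$. In the paper's interpretation, $R_{\mathrm{AC}}$ is the rate of a compressed coding scheme with BPSK whose decoder transfer curve meets the matching condition $\psi=\psi^{opt}_{\mathcal B}$, and $\delta\to0$ is taken together with the underlying code rate $R_{\mathrm C}=\delta R_{\mathrm{AC}}\to0$. *)

theory Defs
  imports "HOL-Analysis.Analysis"
begin

definition phi_inv :: "real \<Rightarrow> real \<Rightarrow> real \<Rightarrow> real" where
  "phi_inv sigma2 \<delta> \<rho> =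
     (if \<rho> < \<delta> / (1 + sigma2) then 1 else \<delta> / \<rho> - sigma2)"

definition mmse_B :: "real \<Rightarrow> real" where
  "mmse_B \<rho> = 1 - (\<integral>x. exp (- (x\<^sup>2) / 2) / sqrt (2 * pi) * tanh (\<rho> - sqrt \<rho> * x) \<partial>lborel)"

definition psi_opt_B :: "real \<Rightarrow> real \<Rightarrow> real \<Rightarrow> real" where
  "psi_opt_B sigma2 \<delta> \<rho> = min (phi_inv sigma2 \<delta> \<rho>) (mmse_B \<rho>)"

definition a_B :: "real \<Rightarrow> real \<Rightarrow> real" where
  "a_B sigma2 \<delta> = (LINT \<rho>:{0..}|lborel. phi_inv sigma2 \<delta> \<rho> - psi_opt_B sigma2 \<delta> \<rho>)"

definition C_G :: "real \<Rightarrow> real" where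
  "C_G sigma2 = ln (1 + 1 / sigma2) / 2"

definition R_AC :: "real \<Rightarrow> real \<Rightarrow> real" where
  "R_AC sigma2 \<delta> = C_G sigma2 - a_B sigma2 \<delta> / (2 * \<delta>)"

end

theory Submission
  imports Defs "HOL-Probability.Probability"
begin

text \<open>Since \<open>|tanh y| \<le> |y|\<close>, the quantity \<open>1 - mmse(\<B>,\<rho>)\<close> is at most
\<open>\<rho> + \<surd>\<rho> E|X| = \<rho> + \<surd>(2\<rho>/\<pi>)\<close>. The integrand of \<open>a\<^sub>\<B>(\<delta>)\<close> is
\<open>max 0 (\<phi>\<^sup>-\<^sup>1\<^sub>\<delta>(\<rho>) - mmse(\<B>,\<rho>))\<close>; it vanishes once \<open>\<phi>\<^sup>-\<^sup>1\<^sub>\<delta>\<close> turns negative,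
i.e. for \<open>\<rho> > \<delta>/\<sigma>\<^sup>2\<close>, and below that point \<open>\<phi>\<^sup>-\<^sup>1\<^sub>\<delta> \<le> 1\<close> bounds it by
\<open>1 - mmse(\<B>,\<rho>) = O(\<surd>\<delta>)\<close>. Hence \<open>a\<^sub>\<B>(\<delta>) = O(\<delta>\<^sup>3\<^sup>/\<^sup>2)\<close>.\<close>

lemma abs_tanh_le_abs: "\<bar>tanh x\<bar> \<le> \<bar>x :: real\<bar>"
proof -
  have "\<bar>x\<bar> - tanh \<bar>x\<bar> \<ge> 0 - tanh 0"
    by (rule DERIV_nonneg_imp_nondecreasing[where f = "\<lambda>y. y - tanh y"])
       (auto intro!: derivative_eq_intros)
  then show ?thesis by simp
qed

lemma abs_integral_std_normal_le:
  fixes h g :: "real \<Rightarrow> real"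
  assumes "h \<in> borel_measurable borel"
    and "integrable lborel (\<lambda>x. std_normal_density x * g x)"
    and "\<And>x. \<bar>h x\<bar> \<le> g x"
  shows "\<bar>\<integral>x. std_normal_density x * h x \<partial>lborel\<bar> \<le> (\<integral>x. std_normal_density x * g x \<partial>lborel)"
proof (rule integral_abs_bound_integral[OF _ assms(2)])
  show bound: "\<bar>std_normal_density x * h x\<bar> \<le> std_normal_density x * g x" for x
    using assms(3)[of x] by (simp add: abs_mult mult_left_mono)
  then show "integrable lborel (\<lambda>x. std_normal_density x * h x)"
    by (intro Bochner_Integration.integrable_bound[OF assms(2)] AE_I2)
       (use assms(1) in \<open>auto intro: order_trans[OF _ abs_ge_self]\<close>)
qed

lemma one_minus_mmse_B_eq:
  "1 - mmse_B \<rho> = (\<integral>x. std_normal_density x * tanh (\<rho> - sqrt \<rho> * x) \<partial>lborel)"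
  by (simp add: mmse_B_def std_normal_density_def)

lemma mmse_B_nonneg: "0 \<le> mmse_B \<rho>"
proof -
  have "\<bar>1 - mmse_B \<rho>\<bar> \<le> (\<integral>x. std_normal_density x * 1 \<partial>lborel)"
    unfolding one_minus_mmse_B_eq
    by (rule abs_integral_std_normal_le)
       (use tanh_real_bounds in \<open>auto intro!: borel_measurable_continuous_onI continuous_intros
          simp: integrable_std_normal_moment[of 0, simplified] less_imp_le abs_le_iff\<close>)
  also have "\<dots> = 1"
    using integral_std_normal_moment_even[of 0] by simp
  finally show ?thesis by simp
qed

lemma abs_one_minus_mmse_B_le:
  assumes "0 \<le> \<rho>"
  shows "\<bar>1 - mmse_B \<rho>\<bar> \<le> \<rho> + sqrt (2 / pi) * sqrt \<rho>"
proof -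
  define g where "g x = \<rho> * (std_normal_density x * \<bar>x\<bar>^0) + sqrt \<rho> * (std_normal_density x * \<bar>x\<bar>^1)"
    for x
  have g_eq: "g x = std_normal_density x * (\<rho> + sqrt \<rho> * \<bar>x\<bar>)" for x
    by (simp add: g_def algebra_simps)
  have "\<bar>1 - mmse_B \<rho>\<bar> \<le> (\<integral>x. g x \<partial>lborel)"
    unfolding one_minus_mmse_B_eq g_eq
  proof (rule abs_integral_std_normal_le)
    show "(\<lambda>x. tanh (\<rho> - sqrt \<rho> * x)) \<in> borel_measurable borel"
      by (auto intro!: borel_measurable_continuous_onI continuous_intros)
    show "integrable lborel (\<lambda>x. std_normal_density x * (\<rho> + sqrt \<rho> * \<bar>x\<bar>))"
      unfolding g_eq[symmetric] g_def
      by (intro integrable_std_normal_moment_abs Bochner_Integration.integrable_add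
          integrable_mult_right)
    show "\<bar>tanh (\<rho> - sqrt \<rho> * x)\<bar> \<le> \<rho> + sqrt \<rho> * \<bar>x\<bar>" for x
      using abs_tanh_le_abs[of "\<rho> - sqrt \<rho> * x"] abs_triangle_ineq4[of \<rho> "sqrt \<rho> * x"] assms
      by (simp add: abs_mult)
  qed
  also have "\<dots> = \<rho> + sqrt (2 / pi) * sqrt \<rho>"
    using integral_std_normal_moment_even[of 0] integral_std_normal_moment_abs_odd[of 0]
    unfolding g_def integral_mult_right_zero
      Bochner_Integration.integral_add[OF integrable_mult_right integrable_mult_right,
        OF integrable_std_normal_moment_abs integrable_std_normal_moment_abs]
    by simp
  finally show ?thesis .
qed

lemma phi_inv_le_one:
  assumes "0 \<le> sigma2" and "0 < \<delta>"
  shows "phi_inv sigma2 \<delta> \<rho> \<le> 1"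
proof (cases "\<rho> < \<delta> / (1 + sigma2)")
  case False
  moreover have "0 < \<delta> / (1 + sigma2)"
    using assms by simp
  ultimately have "0 < \<rho>"
    by linarith
  have "\<delta> \<le> \<rho> * (1 + sigma2)"
    using False assms(1) by (simp add: not_less pos_divide_le_eq)
  with \<open>0 < \<rho>\<close> have "\<delta> / \<rho> \<le> 1 + sigma2"
    by (simp add: divide_le_eq mult.commute)
  with False show ?thesis by (simp add: phi_inv_def)
qed (simp add: phi_inv_def)

lemma phi_inv_neg:
  assumes "0 < sigma2" and "0 < \<delta>" and "\<delta> / sigma2 < \<rho>"
  shows "phi_inv sigma2 \<delta> \<rho> < 0"
proof -
  have "\<delta> / (1 + sigma2) < \<delta> / sigma2"
    using assms by (simp add: frac_less2)
  moreover have "0 < \<rho>"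
    using assms by (auto intro: less_trans[OF divide_pos_pos])
  then have "\<delta> / \<rho> < sigma2"
    using assms by (simp add: divide_less_eq pos_divide_less_eq mult.commute)
  ultimately show ?thesis
    using assms(3) by (simp add: phi_inv_def)
qed

lemma a_B_integrand_le:
  assumes "0 < sigma2" and "0 < \<delta>" and "0 \<le> \<rho>"
  shows "phi_inv sigma2 \<delta> \<rho> - psi_opt_B sigma2 \<delta> \<rho>
           \<le> indicator {0..\<delta> / sigma2} \<rho> * (\<delta> / sigma2 + sqrt (2 / pi) * sqrt (\<delta> / sigma2))"
proof (cases "\<rho> \<le> \<delta> / sigma2")
  case True
  have "phi_inv sigma2 \<delta> \<rho> - psi_opt_B sigma2 \<delta> \<rho> \<le> \<bar>1 - mmse_B \<rho>\<bar>"
    using phi_inv_le_one[of sigma2 \<delta> \<rho>] assms by (simp add: psi_opt_B_def min_def)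
  also have "\<dots> \<le> \<rho> + sqrt (2 / pi) * sqrt \<rho>"
    using abs_one_minus_mmse_B_le assms(3) .
  also have "\<dots> \<le> \<delta> / sigma2 + sqrt (2 / pi) * sqrt (\<delta> / sigma2)"
    using True by (intro add_mono mult_left_mono real_sqrt_le_mono) auto
  finally show ?thesis
    using True assms(3) by simp
next
  case False
  then show ?thesis
    using phi_inv_neg[of sigma2 \<delta> \<rho>] mmse_B_nonneg[of \<rho>] assms
    by (simp add: psi_opt_B_def min_def)
qed

lemma a_B_nonneg: "0 \<le> a_B sigma2 \<delta>"
  unfolding a_B_def set_lebesgue_integral_def
  by (rule integral_nonneg_AE) (simp add: psi_opt_B_def)

lemma a_B_le:
  assumes "0 < sigma2" and "0 < \<delta>"
  shows "a_B sigma2 \<delta> \<le> \<delta> / sigma2 * (\<delta> / sigma2 + sqrt (2 / pi) * sqrt (\<delta> / sigma2))"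
proof -
  define K where "K = \<delta> / sigma2"
  define M where "M = K + sqrt (2 / pi) * sqrt K"
  have "0 < K" and "0 \<le> M"
    using assms by (simp_all add: K_def M_def)
  have "a_B sigma2 \<delta> \<le> (\<integral>\<rho>. indicator {0..K} \<rho> * M \<partial>lborel)"
    unfolding a_B_def set_lebesgue_integral_def
  proof (rule integral_mono')
    show "integrable lborel (\<lambda>\<rho>. indicator {0..K} \<rho> * M)"
      by (intro integrable_mult_left integrable_real_indicator) (auto simp: emeasure_lborel_Icc_eq)
    show "indicator {0..} \<rho> *\<^sub>R (phi_inv sigma2 \<delta> \<rho> - psi_opt_B sigma2 \<delta> \<rho>)
            \<le> indicator {0..K} \<rho> * M" for \<rho>
      using a_B_integrand_le[OF assms, of \<rho>] \<open>0 \<le> M\<close>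
      by (cases "0 \<le> \<rho>") (auto simp: K_def M_def indicator_def)
    show "0 \<le> indicator {0..K} \<rho> * M" for \<rho>
      using \<open>0 \<le> M\<close> by simp
  qed
  also have "\<dots> = K * M"
    using \<open>0 < K\<close> by simp
  finally show ?thesis
    unfolding K_def M_def .
qed

theorem theorem1:
  fixes sigma2 :: real
  assumes "sigma2 > 0"
  shows "((\<lambda>\<delta>. a_B sigma2 \<delta> / (2 * \<delta>)) \<longlongrightarrow> 0) (at_right 0) \<and>
         ((\<lambda>\<delta>. R_AC sigma2 \<delta>) \<longlongrightarrow> C_G sigma2) (at_right 0)"
proof -
  define bound where "bound \<delta> = (\<delta> / sigma2 + sqrt (2 / pi) * sqrt (\<delta> / sigma2)) / (2 * sigma2)" for \<delta>
  have "(bound \<longlongrightarrow> bound 0) (at_right 0)"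
    unfolding bound_def by (intro tendsto_intros) (use assms in auto)
  then have bound_tendsto: "(bound \<longlongrightarrow> 0) (at_right 0)"
    by (simp add: bound_def)
  have "\<forall>\<^sub>F \<delta> in at_right 0. 0 \<le> a_B sigma2 \<delta> / (2 * \<delta>) \<and> a_B sigma2 \<delta> / (2 * \<delta>) \<le> bound \<delta>"
    using eventually_at_right_less[of 0]
  proof eventually_elim
    case (elim \<delta>)
    with a_B_le[OF assms elim] a_B_nonneg[of sigma2 \<delta>] assms show ?case
      by (auto simp: bound_def field_simps)
  qed
  then have "((\<lambda>\<delta>. a_B sigma2 \<delta> / (2 * \<delta>)) \<longlongrightarrow> 0) (at_right 0)"
    by (intro tendsto_sandwich[OF _ _ tendsto_const bound_tendsto]) (auto elim: eventually_mono)
  moreover from tendsto_diff[OF tendsto_const this, of "C_G sigma2"]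
  have "((\<lambda>\<delta>. R_AC sigma2 \<delta>) \<longlongrightarrow> C_G sigma2) (at_right 0)"
    by (simp add: R_AC_def)
  ultimately show ?thesis ..
qed

end
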